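(* Let $D\ge2$, let $C_1,\dots,C_D\subseteq\mathbb{F}_q^n$ be linear codes and let $C_1'\subseteq C_1$ be a linear subcode. Then $$\rho(C_1',C_2,\dots,C_D)\ge\frac{\rho(C_1,C_2,\dots,C_D)}{1+\rho(C_2,\dots,C_D)^{-1}}.$$
   Context: $\mathbb{F}_q$ is a finite field of characteristic 2. For a finite set $S$, $\mathbb{F}_q^S$ is the space of vectors indexed by $S$; $|v|$ is the Hamming weight and $\|v\|=|v|/|S|$. For a collection of $E$ linear codes $\mathcal{A}_1,\dots,\mathcal{A}_E\subseteq\mathbb{F}_q^n$: $\mathcal{L}_i$ is the set of lines in $[n]^E$ parallel to the $i$-th axis (sets $A_1\times\cdots\times A_E$ with $A_i=[n]$, $|A_j|=1$ for $j\ne i$); $\mathcal{A}^{(i)}=\{c\in\mathbb{F}_q^{[n]^E}:c|_\ell\in\mathcal{A}_i\ \forall\ell\in\mathcal{L}_i\}$; $\mathcal{A}_1\boxplus\cdots\boxplus\mathcal{A}_E=\sum_i\mathcal{A}^{(i)}$; for $x\in\mathbb{F}_q^{[n]^E}$, $|x|_i$ is the number of $\ell\in\mathcal{L}_i$ with $x|_\ell\ne0$ and $\|x\|_i=|x|_i/n^{E-1}$. The collection is $\rho$-product-expanding if every $c\in\mathcal{A}_1\boxplus\cdots\boxplus\mathcal{A}_E$ can be written $c=\sum_ia_i$, $a_i\in\mathcal{A}^{(i)}$, with $\rho\sum_i\|a_i\|_i\le\|c\|$; $\rho(\mathcal{A}_1,\dots,\mathcal{A}_E)$ is the maximal such $\rho$.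 *)

theory Defs
  imports "HOL-Library.Extended_Real" "HOL-Library.FuncSet"
begin

text \<open>Vectors of F_q^n are functions nat => 'a vanishing outside {..<n}.
  A linear code is an F_q-subspace of this space.\<close>

definition is_code :: "nat \<Rightarrow> (nat \<Rightarrow> 'a::field) set \<Rightarrow> bool" where
  "is_code n C \<longleftrightarrow> C \<subseteq> {v. \<forall>j. n \<le> j \<longrightarrow> v j = 0} \<and> (\<lambda>_. 0) \<in> C
     \<and> (\<forall>u\<in>C. \<forall>v\<in>C. (\<lambda>j. u j + v j) \<in> C)
     \<and> (\<forall>c. \<forall>v\<in>C. (\<lambda>j. c * v j) \<in> C)"

definition grid :: "nat \<Rightarrow> nat \<Rightarrow> (nat \<Rightarrow> nat) set" where
  "grid n E = PiE {..<E} (\<lambda>_. {..<n})"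

definition words :: "nat \<Rightarrow> nat \<Rightarrow> ((nat \<Rightarrow> nat) \<Rightarrow> 'a::zero) set" where
  "words n E = {x. \<forall>p. p \<notin> grid n E \<longrightarrow> x p = 0}"

definition line_vec :: "nat \<Rightarrow> ((nat \<Rightarrow> nat) \<Rightarrow> 'a::zero) \<Rightarrow> nat \<Rightarrow> (nat \<Rightarrow> nat) \<Rightarrow> nat \<Rightarrow> 'a" where
  "line_vec n x i p = (\<lambda>t. if t < n then x (p(i := t)) else 0)"

text \<open>The lines in L_i are in bijection with grid points p having p i = 0.\<close>
definition lines :: "nat \<Rightarrow> nat \<Rightarrow> nat \<Rightarrow> (nat \<Rightarrow> nat) set" where
  "lines n E i = {p \<in> grid n E. p i = 0}"

definition axis_code :: "nat \<Rightarrow> nat \<Rightarrow> (nat \<Rightarrow> (nat \<Rightarrow> 'a::zero) set) \<Rightarrow> nat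
    \<Rightarrow> ((nat \<Rightarrow> nat) \<Rightarrow> 'a) set" where
  "axis_code n E A i = {c \<in> words n E. \<forall>p \<in> lines n E i. line_vec n c i p \<in> A i}"

definition sum_code :: "nat \<Rightarrow> nat \<Rightarrow> (nat \<Rightarrow> (nat \<Rightarrow> 'a::comm_monoid_add) set)
    \<Rightarrow> ((nat \<Rightarrow> nat) \<Rightarrow> 'a) set" where
  "sum_code n E A = {c. \<exists>a. (\<forall>i<E. a i \<in> axis_code n E A i) \<and> c = (\<lambda>p. \<Sum>i<E. a i p)}"

definition rel_wt :: "nat \<Rightarrow> nat \<Rightarrow> ((nat \<Rightarrow> nat) \<Rightarrow> 'a::zero) \<Rightarrow> real" where
  "rel_wt n E x = real (card {p \<in> grid n E. x p \<noteq> 0}) / real (card (grid n E))"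

definition line_wt :: "nat \<Rightarrow> nat \<Rightarrow> nat \<Rightarrow> ((nat \<Rightarrow> nat) \<Rightarrow> 'a::zero) \<Rightarrow> real" where
  "line_wt n E i x = real (card {p \<in> lines n E i. line_vec n x i p \<noteq> (\<lambda>_. 0)}) / real n ^ (E - 1)"

definition product_expanding :: "nat \<Rightarrow> nat \<Rightarrow> (nat \<Rightarrow> (nat \<Rightarrow> 'a::comm_monoid_add) set)
    \<Rightarrow> real \<Rightarrow> bool" where
  "product_expanding n E A r \<longleftrightarrow>
     (\<forall>c \<in> sum_code n E A. \<exists>a. (\<forall>i<E. a i \<in> axis_code n E A i) \<and> c = (\<lambda>p. \<Sum>i<E. a i p)
        \<and> r * (\<Sum>i<E. line_wt n E i (a i)) \<le> rel_wt n E c)"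

definition rho :: "nat \<Rightarrow> nat \<Rightarrow> (nat \<Rightarrow> (nat \<Rightarrow> 'a::comm_monoid_add) set) \<Rightarrow> ereal" where
  "rho n E A = Sup (ereal ` {r. product_expanding n E A r})"

end

theory Submission
  imports Defs "HOL-Library.Function_Algebras"
begin

text \<open>
  Let c = b_1 + ... + b_D with the lines of b_1 in C_1', and let c = a_1 + ... + a_D be a
  decomposition for (C_1, ..., C_D) witnessing its product expansion. Applying a linear
  projection M of F_q^n onto C_1' to every line of a_1 in the first direction gives a word whose
  lines lie in C_1' and which has no more nonzero lines than a_1. The residual f is supported on
  the nonzero first-direction lines of a_1, so ||f|| <= ||a_1||_1. Since M fixes b_1 and commutes
  with the constraints in the other directions, f = (I - M)(a_1 - b_1) = (I - M)(sum_{i>=2} (b_i - a_i))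
  lies in C^(2) + ... + C^(D). Decomposing every slice of f orthogonal to the first direction by
  the expansion of (C_2, ..., C_D) and adding the pieces to a_2, ..., a_D costs at most
  ||f|| / rho(C_2, ..., C_D) <= ||a_1||_1 / rho(C_2, ..., C_D) in line weight.
\<close>

lemma mem_grid_iff:
  "p \<in> grid n E \<longleftrightarrow> (\<forall>j<E. p j < n) \<and> (\<forall>j. E \<le> j \<longrightarrow> p j = undefined)"
  by (auto simp: grid_def PiE_iff extensional_def)

lemma finite_grid [simp]: "finite (grid n E)"
  unfolding grid_def by (rule finite_PiE) auto

lemma card_grid: "card (grid n E) = n ^ E"
  unfolding grid_def by (simp add: card_PiE)

lemma fun_upd_in_grid: "p \<in> grid n E \<Longrightarrow> k < E \<Longrightarrow> s < n \<Longrightarrow> p(k := s) \<in> grid n E"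
  unfolding mem_grid_iff by auto

lemma line_vec_fun_upd [simp]: "line_vec n x k (p(k := s)) = line_vec n x k p"
  unfolding line_vec_def fun_upd_upd ..

lemma finite_lines [simp]: "finite (lines n E k)"
  unfolding lines_def by simp

lemma card_grid_by_lines:
  assumes "k < E"
  shows "card {p \<in> grid n E. P (p(k := 0))} = n * card {q \<in> lines n E k. P q}"
proof -
  have "{p \<in> grid n E. P (p(k := 0))} = (\<lambda>(t, q). q(k := t)) ` ({..<n} \<times> {q \<in> lines n E k. P q})"
  proof (intro set_eqI iffI)
    fix p assume "p \<in> {p \<in> grid n E. P (p(k := 0))}"
    moreover have "p k < n" "p(k := 0) \<in> grid n E" if "p \<in> grid n E"
      using that assms mem_grid_iff[of p] mem_grid_iff[of "p(k := 0)"] by auto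
    ultimately show "p \<in> (\<lambda>(t, q). q(k := t)) ` ({..<n} \<times> {q \<in> lines n E k. P q})"
      by (auto simp: lines_def intro!: image_eqI[where x = "(p k, p(k := 0))"])
  qed (auto simp: lines_def fun_upd_in_grid fun_upd_idem assms)
  moreover have "inj_on (\<lambda>(t, q). q(k := t)) ({..<n} \<times> {q \<in> lines n E k. P q})"
    unfolding lines_def by (rule inj_onI) (clarsimp simp: fun_eq_iff, metis fun_upd_apply)
  ultimately show ?thesis
    by (simp add: card_image card_cartesian_product)
qed

definition cons_point :: "nat \<Rightarrow> nat \<Rightarrow> (nat \<Rightarrow> nat) \<Rightarrow> nat \<Rightarrow> nat" where
  "cons_point E t q = (\<lambda>j. if j < Suc E then (case j of 0 \<Rightarrow> t | Suc k \<Rightarrow> q k) else undefined)"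

definition tail_point :: "nat \<Rightarrow> (nat \<Rightarrow> nat) \<Rightarrow> nat \<Rightarrow> nat" where
  "tail_point E p = (\<lambda>j. if j < E then p (Suc j) else undefined)"

lemma cons_point_in_grid: "t < n \<Longrightarrow> q \<in> grid n E \<Longrightarrow> cons_point E t q \<in> grid n (Suc E)"
  unfolding mem_grid_iff cons_point_def by (auto split: nat.split)

lemma tail_point_in_grid: "p \<in> grid n (Suc E) \<Longrightarrow> tail_point E p \<in> grid n E"
  unfolding mem_grid_iff tail_point_def by auto

lemma grid_Suc_head_less: "p \<in> grid n (Suc E) \<Longrightarrow> p 0 < n"
  unfolding mem_grid_iff by auto

lemma cons_tail_point: "p \<in> grid n (Suc E) \<Longrightarrow> cons_point E (p 0) (tail_point E p) = p"
  unfolding mem_grid_iff cons_point_def tail_point_def by (auto simp: fun_eq_iff split: nat.split)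

lemma tail_cons_point: "q \<in> grid n E \<Longrightarrow> tail_point E (cons_point E t q) = q"
  unfolding mem_grid_iff cons_point_def tail_point_def by (auto simp: fun_eq_iff)

lemma cons_point_0 [simp]: "cons_point E t q 0 = t"
  unfolding cons_point_def by simp

lemma cons_point_Suc [simp]: "i < E \<Longrightarrow> cons_point E t q (Suc i) = q i"
  unfolding cons_point_def by simp

lemma cons_point_fun_upd_Suc: "i < E \<Longrightarrow> (cons_point E t q)(Suc i := s) = cons_point E t (q(i := s))"
  unfolding cons_point_def by (auto simp: fun_eq_iff split: nat.split)

lemma tail_point_fun_upd_Suc: "i < E \<Longrightarrow> tail_point E (p(Suc i := s)) = (tail_point E p)(i := s)"
  unfolding tail_point_def by (auto simp: fun_eq_iff)

lemma tail_point_apply: "i < E \<Longrightarrow> tail_point E p i = p (Suc i)"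
  unfolding tail_point_def by simp

lemma card_grid_Suc_split:
  "card {p \<in> grid n (Suc E). P (p 0) (tail_point E p)} = (\<Sum>t<n. card {q \<in> grid n E. P t q})"
proof -
  have "{p \<in> grid n (Suc E). P (p 0) (tail_point E p)} =
      (\<lambda>(t, q). cons_point E t q) ` (SIGMA t:{..<n}. {q \<in> grid n E. P t q})"
  proof (intro set_eqI iffI)
    fix p assume p: "p \<in> {p \<in> grid n (Suc E). P (p 0) (tail_point E p)}"
    then show "p \<in> (\<lambda>(t, q). cons_point E t q) ` (SIGMA t:{..<n}. {q \<in> grid n E. P t q})"
      by (auto simp: cons_tail_point grid_Suc_head_less tail_point_in_grid
          intro!: image_eqI[where x = "(p 0, tail_point E p)"])
  qed (auto simp: cons_point_in_grid tail_cons_point)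
  moreover have "inj_on (\<lambda>(t, q). cons_point E t q) (SIGMA t:{..<n}. {q \<in> grid n E. P t q})"
    by (rule inj_onI) (clarsimp, metis cons_point_0 tail_cons_point)
  ultimately show ?thesis
    by (simp add: card_image card_SigmaI)
qed

lemma code_vanishes: "is_code n A \<Longrightarrow> v \<in> A \<Longrightarrow> n \<le> j \<Longrightarrow> v j = 0"
  unfolding is_code_def by auto

lemma code_zero: "is_code n A \<Longrightarrow> (\<lambda>_. 0) \<in> A"
  unfolding is_code_def by auto

lemma code_add: "is_code n A \<Longrightarrow> u \<in> A \<Longrightarrow> v \<in> A \<Longrightarrow> (\<lambda>j. u j + v j) \<in> A"
  unfolding is_code_def by auto

lemma code_scale: "is_code n A \<Longrightarrow> v \<in> A \<Longrightarrow> (\<lambda>j. c * v j) \<in> A"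
  unfolding is_code_def by auto

lemma code_diff:
  fixes A :: "(nat \<Rightarrow> 'a::field) set"
  assumes "is_code n A" "u \<in> A" "v \<in> A"
  shows "(\<lambda>j. u j - v j) \<in> A"
  using code_add[OF assms(1,2) code_scale[OF assms(1,3), of "- 1"]] by simp

lemma code_sum_scaled:
  assumes "is_code n A" "\<And>s. s \<in> S \<Longrightarrow> v s \<in> A"
  shows "(\<lambda>j. \<Sum>s\<in>S. c s * v s j) \<in> A"
proof (cases "finite S")
  case True
  then show ?thesis
    using assms(2)
    by induction (auto intro!: code_zero[OF assms(1)] code_add[OF assms(1)] code_scale[OF assms(1)])
qed (simp add: code_zero[OF assms(1)])

lemma line_vec_add:
  fixes x y :: "(nat \<Rightarrow> nat) \<Rightarrow> 'a::monoid_add"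
  shows "line_vec n (\<lambda>p. x p + y p) i p = (\<lambda>t. line_vec n x i p t + line_vec n y i p t)"
  by (auto simp: line_vec_def fun_eq_iff)

lemma line_vec_diff:
  fixes x y :: "(nat \<Rightarrow> nat) \<Rightarrow> 'a::group_add"
  shows "line_vec n (\<lambda>p. x p - y p) i p = (\<lambda>t. line_vec n x i p t - line_vec n y i p t)"
  by (auto simp: line_vec_def fun_eq_iff)

lemma axis_code_add:
  assumes "is_code n (A i)" "x \<in> axis_code n E A i" "y \<in> axis_code n E A i"
  shows "(\<lambda>p. x p + y p) \<in> axis_code n E A i"
  using assms unfolding axis_code_def words_def by (auto simp: line_vec_add intro: code_add)

lemma axis_code_diff:
  fixes A :: "nat \<Rightarrow> (nat \<Rightarrow> 'a::field) set"
  assumes "is_code n (A i)" "x \<in> axis_code n E A i" "y \<in> axis_code n E A i"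
  shows "(\<lambda>p. x p - y p) \<in> axis_code n E A i"
  using assms unfolding axis_code_def words_def by (auto simp: line_vec_diff intro: code_diff)

lemma line_wt_nonneg: "0 \<le> line_wt n E i x"
  unfolding line_wt_def by simp

lemma rel_wt_nonneg: "0 \<le> rel_wt n E x"
  unfolding rel_wt_def by simp

lemma line_wt_add_le:
  fixes x y :: "(nat \<Rightarrow> nat) \<Rightarrow> 'a::monoid_add"
  shows "line_wt n E i (\<lambda>p. x p + y p) \<le> line_wt n E i x + line_wt n E i y"
proof -
  let ?S = "\<lambda>x. {p \<in> lines n E i. line_vec n x i p \<noteq> (\<lambda>_. 0)}"
  have "?S (\<lambda>p. x p + y p) \<subseteq> ?S x \<union> ?S y"
    by (auto simp: line_vec_add)
  then have "card (?S (\<lambda>p. x p + y p)) \<le> card (?S x \<union> ?S y)"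
    by (intro card_mono) auto
  also have "\<dots> \<le> card (?S x) + card (?S y)"
    by (rule card_Un_le)
  finally show ?thesis
    unfolding line_wt_def by (simp add: add_divide_distrib[symmetric] divide_right_mono)
qed

lemma axis_code_cong: "A i = B i \<Longrightarrow> axis_code n E A i = axis_code n E B i"
  unfolding axis_code_def by simp

lemma sum_code_mono: "(\<And>i. A i \<subseteq> B i) \<Longrightarrow> sum_code n E A \<subseteq> sum_code n E B"
  unfolding sum_code_def axis_code_def by blast

section \<open>Slicing along the first axis\<close>

definition slice :: "nat \<Rightarrow> nat \<Rightarrow> nat \<Rightarrow> ((nat \<Rightarrow> nat) \<Rightarrow> 'a::zero) \<Rightarrow> (nat \<Rightarrow> nat) \<Rightarrow> 'a" where
  "slice n E t x = (\<lambda>q. if q \<in> grid n E then x (cons_point E t q) else 0)"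

definition assemble :: "nat \<Rightarrow> nat \<Rightarrow> (nat \<Rightarrow> (nat \<Rightarrow> nat) \<Rightarrow> 'a::zero) \<Rightarrow> (nat \<Rightarrow> nat) \<Rightarrow> 'a" where
  "assemble n E g = (\<lambda>p. if p \<in> grid n (Suc E) then g (p 0) (tail_point E p) else 0)"

lemma slice_sum: "slice n E t (\<lambda>p. \<Sum>i\<in>I. x i p) = (\<lambda>q. \<Sum>i\<in>I. slice n E t (x i) q)"
  unfolding slice_def by auto

lemma assemble_sum: "assemble n E (\<lambda>t q. \<Sum>i\<in>I. g t i q) = (\<lambda>p. \<Sum>i\<in>I. assemble n E (\<lambda>t. g t i) p)"
  unfolding assemble_def by auto

lemma assemble_slice: "x \<in> words n (Suc E) \<Longrightarrow> assemble n E (\<lambda>t. slice n E t x) = x"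
  unfolding assemble_def slice_def words_def
  by (auto simp: fun_eq_iff tail_point_in_grid cons_tail_point)

lemma slice_in_axis_code:
  assumes "i < E" "t < n" "x \<in> axis_code n (Suc E) A (Suc i)"
  shows "slice n E t x \<in> axis_code n E (\<lambda>k. A (Suc k)) i"
  unfolding axis_code_def words_def
proof (intro CollectI conjI allI impI ballI)
  fix q assume q: "q \<in> lines n E i"
  then have "q \<in> grid n E" "cons_point E t q \<in> lines n (Suc E) (Suc i)"
    using assms(1,2) by (auto simp: lines_def cons_point_in_grid)
  moreover have "line_vec n (slice n E t x) i q = line_vec n x (Suc i) (cons_point E t q)"
    using \<open>q \<in> grid n E\<close> assms(1)
    by (auto simp: line_vec_def slice_def fun_eq_iff cons_point_fun_upd_Suc fun_upd_in_grid)
  ultimately show "line_vec n (slice n E t x) i q \<in> A (Suc i)"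
    using assms(3) unfolding axis_code_def by auto
qed (simp add: slice_def)

lemma line_vec_assemble:
  assumes "p \<in> grid n (Suc E)" "i < E"
  shows "line_vec n (assemble n E g) (Suc i) p = line_vec n (g (p 0)) i (tail_point E p)"
  using assms by (auto simp: line_vec_def assemble_def fun_eq_iff tail_point_fun_upd_Suc fun_upd_in_grid)

lemma assemble_in_axis_code:
  assumes "i < E" "\<And>t. t < n \<Longrightarrow> g t \<in> axis_code n E (\<lambda>k. A (Suc k)) i"
  shows "assemble n E g \<in> axis_code n (Suc E) A (Suc i)"
  unfolding axis_code_def words_def
proof (intro CollectI conjI allI impI ballI)
  fix p assume "p \<in> lines n (Suc E) (Suc i)"
  then have "p \<in> grid n (Suc E)" "tail_point E p \<in> lines n E i"
    using assms(1) by (auto simp: lines_def tail_point_in_grid tail_point_apply)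
  moreover have "g (p 0) \<in> axis_code n E (\<lambda>k. A (Suc k)) i"
    using assms(2) grid_Suc_head_less \<open>p \<in> grid n (Suc E)\<close> by blast
  ultimately show "line_vec n (assemble n E g) (Suc i) p \<in> A (Suc i)"
    using line_vec_assemble[OF \<open>p \<in> grid n (Suc E)\<close> assms(1), of g]
    unfolding axis_code_def by auto
qed (simp add: assemble_def)

lemma line_wt_assemble:
  assumes "i < E"
  shows "line_wt n (Suc E) (Suc i) (assemble n E g) = (\<Sum>t<n. line_wt n E i (g t)) / real n"
proof -
  let ?P = "\<lambda>t q. q i = 0 \<and> line_vec n (g t) i q \<noteq> (\<lambda>_. 0)"
  have "{p \<in> lines n (Suc E) (Suc i). line_vec n (assemble n E g) (Suc i) p \<noteq> (\<lambda>_. 0)}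
      = {p \<in> grid n (Suc E). ?P (p 0) (tail_point E p)}"
    using assms by (auto simp: lines_def tail_point_apply line_vec_assemble)
  then have "card {p \<in> lines n (Suc E) (Suc i). line_vec n (assemble n E g) (Suc i) p \<noteq> (\<lambda>_. 0)}
      = (\<Sum>t<n. card {q \<in> lines n E i. line_vec n (g t) i q \<noteq> (\<lambda>_. 0)})"
    using card_grid_Suc_split[of n E ?P] by (simp add: lines_def)
  moreover have "real n ^ E = real n * real n ^ (E - 1)"
    using assms by (cases E) auto
  ultimately show ?thesis
    unfolding line_wt_def by (simp add: sum_divide_distrib[symmetric] divide_divide_eq_left mult.commute)
qed

lemma rel_wt_by_slices:
  "rel_wt n (Suc E) x = (\<Sum>t<n. rel_wt n E (slice n E t x)) / real n"
proof -
  have "{p \<in> grid n (Suc E). x p \<noteq> 0} = {p \<in> grid n (Suc E). slice n E (p 0) x (tail_point E p) \<noteq> 0}"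
    unfolding slice_def by (auto simp: tail_point_in_grid cons_tail_point)
  then have "card {p \<in> grid n (Suc E). x p \<noteq> 0} = (\<Sum>t<n. card {q \<in> grid n E. slice n E t x q \<noteq> 0})"
    using card_grid_Suc_split[of n E "\<lambda>t q. slice n E t x q \<noteq> 0"] by simp
  then show ?thesis
    unfolding rel_wt_def card_grid
    by (simp add: sum_divide_distrib[symmetric] divide_divide_eq_left mult.commute)
qed

lemma assemble_cong: "(\<And>t. t < n \<Longrightarrow> g t = g' t) \<Longrightarrow> assemble n E g = assemble n E g'"
  unfolding assemble_def by (auto simp: fun_eq_iff grid_Suc_head_less)

lemma slice_in_sum_code:
  assumes "\<And>i. i < E \<Longrightarrow> z i \<in> axis_code n (Suc E) A (Suc i)" "t < n"
  shows "slice n E t (\<lambda>p. \<Sum>i<E. z i p) \<in> sum_code n E (\<lambda>k. A (Suc k))"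
  unfolding sum_code_def slice_sum using slice_in_axis_code[OF _ assms(2) assms(1)]
  by (intro CollectI exI[of _ "\<lambda>i. slice n E t (z i)"]) auto

lemma redecompose_by_slices:
  assumes expanding: "product_expanding n E (\<lambda>i. A (Suc i)) r"
    and z: "\<And>i. i < E \<Longrightarrow> z i \<in> axis_code n (Suc E) A (Suc i)"
  obtains h where "\<And>i. i < E \<Longrightarrow> h i \<in> axis_code n (Suc E) A (Suc i)"
    and "(\<lambda>p. \<Sum>i<E. h i p) = (\<lambda>p. \<Sum>i<E. z i p)"
    and "r * (\<Sum>i<E. line_wt n (Suc E) (Suc i) (h i)) \<le> rel_wt n (Suc E) (\<lambda>p. \<Sum>i<E. z i p)"
proof -
  define f where "f = (\<lambda>p. \<Sum>i<E. z i p)"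
  have "\<forall>t\<in>{..<n}. \<exists>G. (\<forall>i<E. G i \<in> axis_code n E (\<lambda>k. A (Suc k)) i)
      \<and> slice n E t f = (\<lambda>q. \<Sum>i<E. G i q) \<and> r * (\<Sum>i<E. line_wt n E i (G i)) \<le> rel_wt n E (slice n E t f)"
  proof
    fix t assume "t \<in> {..<n}"
    then have "slice n E t f \<in> sum_code n E (\<lambda>k. A (Suc k))"
      unfolding f_def using z by (intro slice_in_sum_code) auto
    then show "\<exists>G. (\<forall>i<E. G i \<in> axis_code n E (\<lambda>k. A (Suc k)) i)
      \<and> slice n E t f = (\<lambda>q. \<Sum>i<E. G i q) \<and> r * (\<Sum>i<E. line_wt n E i (G i)) \<le> rel_wt n E (slice n E t f)"
      using expanding unfolding product_expanding_def by blast
  qed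
  from bchoice[OF this] obtain G where G: "\<forall>t\<in>{..<n}. (\<forall>i<E. G t i \<in> axis_code n E (\<lambda>k. A (Suc k)) i)
      \<and> slice n E t f = (\<lambda>q. \<Sum>i<E. G t i q) \<and> r * (\<Sum>i<E. line_wt n E i (G t i)) \<le> rel_wt n E (slice n E t f)"
    by blast
  define h where "h i = assemble n E (\<lambda>t. G t i)" for i
  show thesis
  proof
    show "h i \<in> axis_code n (Suc E) A (Suc i)" if "i < E" for i
      unfolding h_def using that G by (auto intro: assemble_in_axis_code)
    have "f \<in> words n (Suc E)"
      using z unfolding f_def words_def axis_code_def by simp
    then have "f = assemble n E (\<lambda>t. slice n E t f)"
      by (simp add: assemble_slice)
    also have "\<dots> = assemble n E (\<lambda>t q. \<Sum>i<E. G t i q)"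
      using G by (intro assemble_cong) auto
    finally show "(\<lambda>p. \<Sum>i<E. h i p) = (\<lambda>p. \<Sum>i<E. z i p)"
      unfolding h_def f_def assemble_sum by simp
    have "(\<Sum>i<E. line_wt n (Suc E) (Suc i) (h i)) = (\<Sum>i<E. (\<Sum>t<n. line_wt n E i (G t i)) / real n)"
      unfolding h_def by (intro sum.cong) (simp_all add: line_wt_assemble)
    then have "r * (\<Sum>i<E. line_wt n (Suc E) (Suc i) (h i))
        = (\<Sum>t<n. r * (\<Sum>i<E. line_wt n E i (G t i))) / real n"
      by (simp add: sum_divide_distrib[symmetric] sum_distrib_left sum.swap[of _ "{..<n}"])
    also have "\<dots> \<le> (\<Sum>t<n. rel_wt n E (slice n E t f)) / real n"
      by (intro divide_right_mono sum_mono) (use G in blast, simp)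
    also have "\<dots> = rel_wt n (Suc E) f"
      by (simp add: rel_wt_by_slices)
    finally show "r * (\<Sum>i<E. line_wt n (Suc E) (Suc i) (h i)) \<le> rel_wt n (Suc E) (\<lambda>p. \<Sum>i<E. z i p)"
      unfolding f_def .
  qed
qed

section \<open>Matrices acting along an axis\<close>

definition mat_vec :: "nat \<Rightarrow> (nat \<Rightarrow> nat \<Rightarrow> 'a::comm_semiring_0) \<Rightarrow> (nat \<Rightarrow> 'a) \<Rightarrow> nat \<Rightarrow> 'a" where
  "mat_vec n M v = (\<lambda>j. if j < n then \<Sum>s<n. M j s * v s else 0)"

text \<open>Viewing F_q^([n]^E) as the E-fold tensor power of F_q^n, \<open>axis_map n E k M\<close> is
  \<open>M\<close> acting on the \<open>k\<close>-th factor.\<close>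

definition axis_map :: "nat \<Rightarrow> nat \<Rightarrow> nat \<Rightarrow> (nat \<Rightarrow> nat \<Rightarrow> 'a::comm_semiring_0)
    \<Rightarrow> ((nat \<Rightarrow> nat) \<Rightarrow> 'a) \<Rightarrow> (nat \<Rightarrow> nat) \<Rightarrow> 'a" where
  "axis_map n E k M x = (\<lambda>p. if p \<in> grid n E then \<Sum>s<n. M (p k) s * x (p(k := s)) else 0)"

lemma mat_vec_zero [simp]: "mat_vec n M (\<lambda>_. 0) = (\<lambda>_. 0)"
  by (simp add: mat_vec_def fun_eq_iff)

lemma line_vec_at: "p \<in> grid n E \<Longrightarrow> k < E \<Longrightarrow> line_vec n x k p (p k) = x p"
  by (simp add: line_vec_def mem_grid_iff)

lemma line_vec_axis_map:
  assumes "k < E" "p \<in> grid n E"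
  shows "line_vec n (axis_map n E k M x) k p = mat_vec n M (line_vec n x k p)"
  using assms by (auto simp: line_vec_def mat_vec_def axis_map_def fun_eq_iff fun_upd_in_grid intro!: sum.cong)

lemma line_vec_axis_map_other:
  assumes "i < E" "k < E" "i \<noteq> k" "p \<in> grid n E"
  shows "line_vec n (axis_map n E k M x) i p = (\<lambda>t. \<Sum>s<n. M (p k) s * line_vec n x i (p(k := s)) t)"
  using assms
  by (auto simp: line_vec_def axis_map_def fun_eq_iff fun_upd_in_grid fun_upd_twist[OF assms(3)]
      intro!: sum.cong)

lemma axis_map_in_axis_code:
  assumes "k < E" "\<And>v. mat_vec n M v \<in> A k"
  shows "axis_map n E k M x \<in> axis_code n E A k"
  unfolding axis_code_def words_def
proof (intro CollectI conjI allI impI ballI)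
  fix p assume "p \<in> lines n E k"
  then show "line_vec n (axis_map n E k M x) k p \<in> A k"
    using assms by (simp add: lines_def line_vec_axis_map)
qed (simp add: axis_map_def)

lemma axis_map_in_axis_code_other:
  fixes A :: "nat \<Rightarrow> (nat \<Rightarrow> 'a::field) set"
  assumes "is_code n (A i)" "i < E" "k < E" "i \<noteq> k" "x \<in> axis_code n E A i"
  shows "axis_map n E k M x \<in> axis_code n E A i"
  unfolding axis_code_def words_def
proof (intro CollectI conjI allI impI ballI)
  fix p assume p: "p \<in> lines n E i"
  then have "p(k := s) \<in> lines n E i" if "s < n" for s
    using that assms(3,4) by (auto simp: lines_def fun_upd_in_grid)
  then have "line_vec n x i (p(k := s)) \<in> A i" if "s \<in> {..<n}" for s
    using that assms(5) unfolding axis_code_def by blast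
  then have "(\<lambda>t. \<Sum>s<n. M (p k) s * line_vec n x i (p(k := s)) t) \<in> A i"
    by (rule code_sum_scaled[OF assms(1)])
  then show "line_vec n (axis_map n E k M x) i p \<in> A i"
    using p assms(2-4) by (simp add: line_vec_axis_map_other lines_def)
qed (simp add: axis_map_def)

lemma axis_map_fixes_axis_code:
  assumes "k < E" "\<And>v. v \<in> A k \<Longrightarrow> mat_vec n M v = v" "x \<in> axis_code n E A k"
  shows "axis_map n E k M x = x"
proof
  fix p
  show "axis_map n E k M x p = x p"
  proof (cases "p \<in> grid n E")
    case True
    then have "p(k := 0) \<in> lines n E k"
      using assms(1) by (auto simp: lines_def mem_grid_iff)
    then have "mat_vec n M (line_vec n x k p) = line_vec n x k p"
      using assms(2,3) line_vec_fun_upd[of n x k p 0] unfolding axis_code_def by fastforce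
    then show ?thesis
      using True assms(1) line_vec_at line_vec_axis_map by metis
  qed (use assms(3) in \<open>simp add: axis_map_def axis_code_def words_def\<close>)
qed

lemma axis_map_add:
  "axis_map n E k M (\<lambda>p. x p + y p) = (\<lambda>p. axis_map n E k M x p + axis_map n E k M y p)"
  by (simp add: axis_map_def distrib_left sum.distrib fun_eq_iff)

lemma axis_map_sum:
  "axis_map n E k M (\<lambda>p. \<Sum>i\<in>I. x i p) = (\<lambda>p. \<Sum>i\<in>I. axis_map n E k M (x i) p)"
  by (simp add: axis_map_def sum_distrib_left fun_eq_iff sum.swap[of _ "{..<n}"])

lemma line_wt_axis_map_le:
  assumes "k < E"
  shows "line_wt n E k (axis_map n E k M x) \<le> line_wt n E k x"
proof -
  have "{p \<in> lines n E k. line_vec n (axis_map n E k M x) k p \<noteq> (\<lambda>_. 0)}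
      \<subseteq> {p \<in> lines n E k. line_vec n x k p \<noteq> (\<lambda>_. 0)}"
    using assms by (auto simp: lines_def line_vec_axis_map)
  then show ?thesis
    unfolding line_wt_def by (intro divide_right_mono of_nat_mono card_mono) auto
qed

lemma rel_wt_axis_map_residual_le:
  fixes x :: "(nat \<Rightarrow> nat) \<Rightarrow> 'a::comm_ring"
  assumes "k < E" "x \<in> words n E"
  shows "rel_wt n E (\<lambda>p. x p - axis_map n E k M x p) \<le> line_wt n E k x"
proof -
  define N where "N = card {q \<in> lines n E k. line_vec n x k q \<noteq> (\<lambda>_. 0)}"
  have "x p - axis_map n E k M x p = 0" if "p \<in> grid n E" "line_vec n x k p = (\<lambda>_. 0)" for p
  proof -
    have "axis_map n E k M x p = mat_vec n M (line_vec n x k p) (p k)"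
      using that assms(1) by (metis line_vec_at line_vec_axis_map)
    then show ?thesis
      using that assms(1) line_vec_at[of p n E k x] by simp
  qed
  then have "{p \<in> grid n E. x p - axis_map n E k M x p \<noteq> 0}
      \<subseteq> {p \<in> grid n E. line_vec n x k (p(k := 0)) \<noteq> (\<lambda>_. 0)}"
    by auto
  then have "card {p \<in> grid n E. x p - axis_map n E k M x p \<noteq> 0} \<le> n * N"
    unfolding N_def card_grid_by_lines[OF assms(1), symmetric] by (intro card_mono) auto
  then have "rel_wt n E (\<lambda>p. x p - axis_map n E k M x p) \<le> real (n * N) / real n ^ E"
    unfolding rel_wt_def card_grid of_nat_power by (intro divide_right_mono of_nat_mono) simp_all
  also have "\<dots> \<le> line_wt n E k x"
    using assms(1) by (cases "n = 0") (auto simp: line_wt_def N_def power_eq_if)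
  finally show ?thesis .
qed

lemma sum_fun_apply: "(\<Sum>i\<in>I. f i) x = (\<Sum>i\<in>I. f i x)"
  by (induction I rule: infinite_finite_induct) auto

lemma code_projection_matrix:
  fixes A :: "(nat \<Rightarrow> 'a::field) set"
  assumes code: "is_code n A"
  obtains M where "\<And>v. mat_vec n M v \<in> A" "\<And>v. v \<in> A \<Longrightarrow> mat_vec n M v = v"
proof -
  define scale :: "'a \<Rightarrow> (nat \<Rightarrow> 'a) \<Rightarrow> nat \<Rightarrow> 'a" where "scale c v = (\<lambda>j. c * v j)" for c v
  interpret V: vector_space scale
    by unfold_locales (auto simp: scale_def fun_eq_iff algebra_simps)
  interpret VV: vector_space_pair scale scale ..
  have "V.subspace A"
    using code unfolding is_code_def V.subspace_def scale_def by (auto simp: plus_fun_def zero_fun_def)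
  then obtain Q where Q_range: "range Q \<subseteq> A" and Q_linear: "Vector_Spaces.linear scale scale Q"
    and Q_fixes: "\<forall>v\<in>A. Q (id v) = v"
    using VV.linear_exists_left_inverse_on[OF V.linear_id _ inj_on_id] by blast
  define unit :: "nat \<Rightarrow> nat \<Rightarrow> 'a" where "unit s = (\<lambda>j. if j = s then 1 else 0)" for s
  define M where "M j s = Q (unit s) j" for j s
  have mat_vec_eq: "mat_vec n M v = Q (\<lambda>j. if j < n then v j else 0)" for v
  proof -
    have "(\<lambda>j. if j < n then v j else 0) = (\<Sum>s<n. scale (v s) (unit s))"
      by (auto simp: fun_eq_iff sum_fun_apply scale_def unit_def if_distrib[where f = "(*) _"] cong: if_cong)
    then have "Q (\<lambda>j. if j < n then v j else 0) = (\<Sum>s<n. Q (scale (v s) (unit s)))"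
      by (simp add: VV.linear_sum[OF Q_linear])
    also have "\<dots> = (\<Sum>s<n. scale (v s) (Q (unit s)))"
      by (simp add: VV.linear_scale[OF Q_linear])
    finally have "Q (\<lambda>j. if j < n then v j else 0) j = (\<Sum>s<n. M j s * v s)" for j
      by (simp add: sum_fun_apply scale_def M_def mult.commute)
    moreover have "Q (\<lambda>j. if j < n then v j else 0) j = 0" if "n \<le> j" for j
      using code_vanishes[OF code] Q_range that by blast
    ultimately show ?thesis
      by (auto simp: fun_eq_iff mat_vec_def)
  qed
  show thesis
  proof (rule that)
    show "mat_vec n M v \<in> A" for v
      using mat_vec_eq Q_range by (simp add: image_subset_iff)
    show "mat_vec n M v = v" if "v \<in> A" for v
    proof -
      have "(\<lambda>j. if j < n then v j else 0) = v"
        using code_vanishes[OF code that] by (auto simp: fun_eq_iff)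
      then show ?thesis
        using mat_vec_eq Q_fixes that by simp
    qed
  qed
qed

section \<open>Product expansion of a subcode\<close>

lemma residual_in_other_axes:
  fixes C :: "nat \<Rightarrow> (nat \<Rightarrow> 'a::field) set"
  assumes codes: "\<And>i. i < E \<Longrightarrow> is_code n (C (Suc i))"
    and b: "b \<in> axis_code n (Suc E) C 0" and M_fixes: "\<And>v. v \<in> C 0 \<Longrightarrow> mat_vec n M v = v"
    and y: "\<And>i. i < E \<Longrightarrow> y i \<in> axis_code n (Suc E) C (Suc i)"
    and x: "x = (\<lambda>p. b p + (\<Sum>i<E. y i p))"
  obtains z where "\<And>i. i < E \<Longrightarrow> z i \<in> axis_code n (Suc E) C (Suc i)"
    and "(\<lambda>p. x p - axis_map n (Suc E) 0 M x p) = (\<lambda>p. \<Sum>i<E. z i p)"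
proof -
  let ?M0 = "axis_map n (Suc E) 0 M"
  define z where "z i = (\<lambda>p. y i p - ?M0 (y i) p)" for i
  have "?M0 b = b"
    by (rule axis_map_fixes_axis_code[OF _ M_fixes b]) simp
  then have "?M0 x p = b p + (\<Sum>i<E. ?M0 (y i) p)" for p
    unfolding x by (simp add: axis_map_add axis_map_sum)
  then have "(\<lambda>p. x p - ?M0 x p) = (\<lambda>p. \<Sum>i<E. z i p)"
    unfolding x z_def by (simp add: sum_subtractf)
  moreover have "z i \<in> axis_code n (Suc E) C (Suc i)" if "i < E" for i
    unfolding z_def using that codes y by (auto intro: axis_code_diff axis_map_in_axis_code_other)
  ultimately show thesis
    using that by blast
qed

lemma residual_redecomposition:
  fixes C :: "nat \<Rightarrow> (nat \<Rightarrow> 'a::field) set"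
  assumes codes: "\<And>i. i < E \<Longrightarrow> is_code n (C (Suc i))"
    and expanding: "product_expanding n E (\<lambda>i. C (Suc i)) r"
    and M_fixes: "\<And>v. v \<in> B \<Longrightarrow> mat_vec n M v = v"
    and a: "\<forall>i<Suc E. a i \<in> axis_code n (Suc E) C i"
    and b: "\<forall>i<Suc E. b i \<in> axis_code n (Suc E) (C(0 := B)) i"
    and same_sum: "(\<lambda>p. \<Sum>i<Suc E. a i p) = (\<lambda>p. \<Sum>i<Suc E. b i p)"
  obtains h where "\<And>i. i < E \<Longrightarrow> h i \<in> axis_code n (Suc E) C (Suc i)"
    and "(\<lambda>p. \<Sum>i<E. h i p) = (\<lambda>p. a 0 p - axis_map n (Suc E) 0 M (a 0) p)"
    and "r * (\<Sum>i<E. line_wt n (Suc E) (Suc i) (h i)) \<le> line_wt n (Suc E) 0 (a 0)"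
proof -
  let ?C' = "C(0 := B)"
  have axis_Suc: "axis_code n (Suc E) ?C' (Suc i) = axis_code n (Suc E) C (Suc i)" for i
    by (rule axis_code_cong) simp
  have y: "(\<lambda>p. b (Suc i) p - a (Suc i) p) \<in> axis_code n (Suc E) ?C' (Suc i)" if "i < E" for i
    unfolding axis_Suc by (intro axis_code_diff) (use that a b codes axis_Suc in auto)
  have b0: "b 0 \<in> axis_code n (Suc E) ?C' 0"
    using b by simp
  have a0: "a 0 = (\<lambda>p. b 0 p + (\<Sum>i<E. b (Suc i) p - a (Suc i) p))"
  proof
    fix p
    have "a 0 p + (\<Sum>i<E. a (Suc i) p) = b 0 p + (\<Sum>i<E. b (Suc i) p)"
      using fun_cong[OF same_sum, of p] by (simp add: sum.lessThan_Suc_shift del: sum.lessThan_Suc)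
    then show "a 0 p = b 0 p + (\<Sum>i<E. b (Suc i) p - a (Suc i) p)"
      by (simp add: sum_subtractf algebra_simps)
  qed
  \<comment> \<open>Since \<open>M\<close> fixes \<open>b 0\<close>, the residual of \<open>a 0\<close> is that of \<open>a 0 - b 0\<close>, which lies in the other axes.\<close>
  obtain z where z: "\<And>i. i < E \<Longrightarrow> z i \<in> axis_code n (Suc E) C (Suc i)"
    and residual: "(\<lambda>p. a 0 p - axis_map n (Suc E) 0 M (a 0) p) = (\<lambda>p. \<Sum>i<E. z i p)"
    by (rule residual_in_other_axes[OF _ b0 _ y a0]) (use codes M_fixes axis_Suc in auto)
  obtain h where "\<And>i. i < E \<Longrightarrow> h i \<in> axis_code n (Suc E) C (Suc i)"
    and "(\<lambda>p. \<Sum>i<E. h i p) = (\<lambda>p. \<Sum>i<E. z i p)"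
    and "r * (\<Sum>i<E. line_wt n (Suc E) (Suc i) (h i)) \<le> rel_wt n (Suc E) (\<lambda>p. \<Sum>i<E. z i p)"
    using redecompose_by_slices[OF expanding z] by blast
  moreover have "rel_wt n (Suc E) (\<lambda>p. \<Sum>i<E. z i p) \<le> line_wt n (Suc E) 0 (a 0)"
    unfolding residual[symmetric] using a by (intro rel_wt_axis_map_residual_le) (auto simp: axis_code_def)
  ultimately show thesis
    using that residual by fastforce
qed

lemma ratio_weight_le:
  fixes r W S H :: real
  assumes "0 < r" "W \<le> S + H" "r * H \<le> S"
  shows "r / (r + 1) * W \<le> S"
  using assms mult_left_mono[OF assms(2), of r] by (simp add: field_simps)

lemma subcode_redecomposition:
  fixes C :: "nat \<Rightarrow> (nat \<Rightarrow> 'a::field) set"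
  assumes codes: "\<And>i. i < E \<Longrightarrow> is_code n (C (Suc i))" and subcode: "is_code n B"
    and expanding: "0 < r" "product_expanding n E (\<lambda>i. C (Suc i)) r"
    and a: "\<forall>i<Suc E. a i \<in> axis_code n (Suc E) C i"
    and b: "\<forall>i<Suc E. b i \<in> axis_code n (Suc E) (C(0 := B)) i"
    and same_sum: "(\<lambda>p. \<Sum>i<Suc E. a i p) = (\<lambda>p. \<Sum>i<Suc E. b i p)"
  obtains d where "\<forall>i<Suc E. d i \<in> axis_code n (Suc E) (C(0 := B)) i"
    and "(\<lambda>p. \<Sum>i<Suc E. d i p) = (\<lambda>p. \<Sum>i<Suc E. a i p)"
    and "r / (r + 1) * (\<Sum>i<Suc E. line_wt n (Suc E) i (d i)) \<le> (\<Sum>i<Suc E. line_wt n (Suc E) i (a i))"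
proof -
  obtain M where M_range: "\<And>v. mat_vec n M v \<in> B" and M_fixes: "\<And>v. v \<in> B \<Longrightarrow> mat_vec n M v = v"
    using code_projection_matrix[OF subcode] by blast
  let ?M0 = "axis_map n (Suc E) 0 M"
  obtain h where h: "\<And>i. i < E \<Longrightarrow> h i \<in> axis_code n (Suc E) C (Suc i)"
    and h_sum: "(\<lambda>p. \<Sum>i<E. h i p) = (\<lambda>p. a 0 p - ?M0 (a 0) p)"
    and h_wt: "r * (\<Sum>i<E. line_wt n (Suc E) (Suc i) (h i)) \<le> line_wt n (Suc E) 0 (a 0)"
    using residual_redecomposition[OF codes expanding(2) M_fixes a b same_sum] by blast
  define d where "d i = (case i of 0 \<Rightarrow> ?M0 (a 0) | Suc j \<Rightarrow> (\<lambda>p. a (Suc j) p + h j p))" for i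
  show thesis
  proof
    have "axis_code n (Suc E) (C(0 := B)) (Suc j) = axis_code n (Suc E) C (Suc j)" for j
      by (rule axis_code_cong) simp
    then have "d i \<in> axis_code n (Suc E) (C(0 := B)) i" if "i < Suc E" for i
      using that M_range a h codes
      by (cases i) (auto simp: d_def intro: axis_map_in_axis_code axis_code_add)
    then show "\<forall>i<Suc E. d i \<in> axis_code n (Suc E) (C(0 := B)) i"
      by blast
    show "(\<lambda>p. \<Sum>i<Suc E. d i p) = (\<lambda>p. \<Sum>i<Suc E. a i p)"
      using fun_cong[OF h_sum]
      by (simp add: d_def sum.lessThan_Suc_shift sum.distrib fun_eq_iff algebra_simps del: sum.lessThan_Suc)
    define S where "S = (\<Sum>i<Suc E. line_wt n (Suc E) i (a i))"
    have "(\<Sum>i<Suc E. line_wt n (Suc E) i (d i))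
        = line_wt n (Suc E) 0 (?M0 (a 0)) + (\<Sum>i<E. line_wt n (Suc E) (Suc i) (\<lambda>p. a (Suc i) p + h i p))"
      by (simp add: d_def sum.lessThan_Suc_shift del: sum.lessThan_Suc)
    also have "\<dots> \<le> line_wt n (Suc E) 0 (a 0)
        + (\<Sum>i<E. line_wt n (Suc E) (Suc i) (a (Suc i)) + line_wt n (Suc E) (Suc i) (h i))"
      by (intro add_mono line_wt_axis_map_le sum_mono line_wt_add_le) simp
    also have "\<dots> = S + (\<Sum>i<E. line_wt n (Suc E) (Suc i) (h i))"
      by (simp add: S_def sum.lessThan_Suc_shift sum.distrib del: sum.lessThan_Suc)
    finally have W_le: "(\<Sum>i<Suc E. line_wt n (Suc E) i (d i)) \<le> S + (\<Sum>i<E. line_wt n (Suc E) (Suc i) (h i))" .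
    have "line_wt n (Suc E) 0 (a 0) \<le> S"
      unfolding S_def by (simp add: sum.lessThan_Suc_shift sum_nonneg line_wt_nonneg del: sum.lessThan_Suc)
    then show "r / (r + 1) * (\<Sum>i<Suc E. line_wt n (Suc E) i (d i)) \<le> S"
      by (intro ratio_weight_le[OF expanding(1) W_le] order_trans[OF h_wt])
  qed
qed

lemma product_expanding_subcode:
  fixes C :: "nat \<Rightarrow> (nat \<Rightarrow> 'a::field) set"
  assumes codes: "\<And>i. i < E \<Longrightarrow> is_code n (C (Suc i))"
    and subcode: "is_code n B" "B \<subseteq> C 0"
    and r1: "0 \<le> r1" "product_expanding n (Suc E) C r1"
    and r2: "0 < r2" "product_expanding n E (\<lambda>i. C (Suc i)) r2"
  shows "product_expanding n (Suc E) (C(0 := B)) (r1 * r2 / (r2 + 1))"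
  unfolding product_expanding_def
proof
  fix c assume c: "c \<in> sum_code n (Suc E) (C(0 := B))"
  then obtain b where b: "\<forall>i<Suc E. b i \<in> axis_code n (Suc E) (C(0 := B)) i"
    and c_b: "c = (\<lambda>p. \<Sum>i<Suc E. b i p)"
    unfolding sum_code_def by blast
  have "(C(0 := B)) i \<subseteq> C i" for i
    using subcode(2) by simp
  then have "c \<in> sum_code n (Suc E) C"
    using c sum_code_mono by blast
  then obtain a where a: "\<forall>i<Suc E. a i \<in> axis_code n (Suc E) C i"
    and c_a: "c = (\<lambda>p. \<Sum>i<Suc E. a i p)"
    and a_wt: "r1 * (\<Sum>i<Suc E. line_wt n (Suc E) i (a i)) \<le> rel_wt n (Suc E) c"
    using r1(2) unfolding product_expanding_def by blast
  have "(\<lambda>p. \<Sum>i<Suc E. a i p) = (\<lambda>p. \<Sum>i<Suc E. b i p)"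
    using c_a c_b by simp
  then obtain d where d: "\<forall>i<Suc E. d i \<in> axis_code n (Suc E) (C(0 := B)) i"
    and d_sum: "(\<lambda>p. \<Sum>i<Suc E. d i p) = (\<lambda>p. \<Sum>i<Suc E. a i p)"
    and d_wt: "r2 / (r2 + 1) * (\<Sum>i<Suc E. line_wt n (Suc E) i (d i)) \<le> (\<Sum>i<Suc E. line_wt n (Suc E) i (a i))"
    using subcode_redecomposition[OF codes subcode(1) r2 a b] by blast
  have "r1 * r2 / (r2 + 1) * (\<Sum>i<Suc E. line_wt n (Suc E) i (d i)) \<le> rel_wt n (Suc E) c"
    using mult_left_mono[OF d_wt r1(1)] a_wt by (simp add: mult.assoc)
  moreover have "c = (\<lambda>p. \<Sum>i<Suc E. d i p)"
    using c_a d_sum by simp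
  ultimately show "\<exists>d. (\<forall>i<Suc E. d i \<in> axis_code n (Suc E) (C(0 := B)) i) \<and> c = (\<lambda>p. \<Sum>i<Suc E. d i p)
      \<and> r1 * r2 / (r2 + 1) * (\<Sum>i<Suc E. line_wt n (Suc E) i (d i)) \<le> rel_wt n (Suc E) c"
    using d by blast
qed

section \<open>The expansion constant\<close>

lemma product_expanding_mono:
  assumes "product_expanding n E A r" "r' \<le> r"
  shows "product_expanding n E A r'"
  unfolding product_expanding_def
proof
  fix c assume "c \<in> sum_code n E A"
  then obtain a where a: "\<forall>i<E. a i \<in> axis_code n E A i" "c = (\<lambda>p. \<Sum>i<E. a i p)"
    and wt: "r * (\<Sum>i<E. line_wt n E i (a i)) \<le> rel_wt n E c"
    using assms(1) unfolding product_expanding_def by blast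
  have "r' * (\<Sum>i<E. line_wt n E i (a i)) \<le> r * (\<Sum>i<E. line_wt n E i (a i))"
    using assms(2) by (intro mult_right_mono sum_nonneg line_wt_nonneg)
  then show "\<exists>a. (\<forall>i<E. a i \<in> axis_code n E A i) \<and> c = (\<lambda>p. \<Sum>i<E. a i p)
      \<and> r' * (\<Sum>i<E. line_wt n E i (a i)) \<le> rel_wt n E c"
    using a wt by (intro exI[of _ a]) simp
qed

lemma product_expanding_nonpos: "r \<le> 0 \<Longrightarrow> product_expanding n E A r"
  by (rule product_expanding_mono[of _ _ _ 0])
    (auto simp: product_expanding_def sum_code_def rel_wt_nonneg)

lemma rho_ge: "product_expanding n E A r \<Longrightarrow> ereal r \<le> rho n E A"
  unfolding rho_def by (rule Sup_upper) simp

lemma rho_nonneg: "0 \<le> rho n E A"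
  using rho_ge[OF product_expanding_nonpos, of 0] by (simp add: zero_ereal_def)

lemma product_expanding_less_rho: "ereal r < rho n E A \<Longrightarrow> product_expanding n E A r"
  unfolding rho_def less_Sup_iff by (auto intro: product_expanding_mono)

lemma ereal_less_divide_one_plus_inverseE:
  fixes \<rho> \<rho>' :: ereal
  assumes "0 < y" "0 \<le> \<rho>'" "ereal y < \<rho> / (1 + inverse \<rho>')"
  obtains r1 r2 where "0 < r1" "0 < r2" "ereal r1 < \<rho>" "ereal r2 < \<rho>'" "y = r1 * r2 / (r2 + 1)"
proof -
  have "\<exists>z. y < z \<and> ereal z < \<rho> \<and> ereal (y / (z - y)) < \<rho>'"
  proof (cases \<rho>')
    case (real x)
    have "x \<noteq> 0" \<comment> \<open>\<open>inverse 0 = \<infinity>\<close>, so \<open>\<rho>' = 0\<close> makes the bound \<open>0\<close>\<close>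
      using assms(1,3) real by (auto simp: zero_ereal_def[symmetric])
    then have x: "0 < x"
      using assms(2) real by simp
    define q where "q = 1 + 1 / x"
    have "1 + inverse \<rho>' = ereal q" "0 < q"
      using x real by (simp_all add: q_def inverse_eq_divide add_pos_pos)
    then have "ereal (q * y) < \<rho>"
      using assms(3) ereal_less_divide_pos[of "ereal q" "ereal y" \<rho>] by simp
    then obtain z where z: "q * y < z" "ereal z < \<rho>"
      using ereal_dense2 less_ereal.simps(1) by blast
    have "y < x * (z - y)"
      using z(1) x by (simp add: q_def field_simps)
    moreover from this have "y < z"
      using x assms(1) zero_less_mult_pos[of x "z - y"] by simp
    ultimately have "y < z" "y / (z - y) < x"
      by (simp_all add: pos_divide_less_eq mult.commute)
    then show ?thesis
      using z real by auto
  next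
    case PInf
    then have "ereal y < \<rho>"
      using assms(3) by simp
    then obtain z where "ereal y < ereal z" "ereal z < \<rho>"
      using ereal_dense2 by blast
    then show ?thesis
      using PInf by auto
  qed (use assms(2) in simp)
  then obtain z where z: "y < z" "ereal z < \<rho>" "ereal (y / (z - y)) < \<rho>'"
    by blast
  show thesis
  proof (rule that[of z "y / (z - y)"])
    show "y = z * (y / (z - y)) / (y / (z - y) + 1)"
      using z(1) assms(1) by (simp add: field_simps)
  qed (use z assms(1) in auto)
qed

lemma ereal_divide_one_plus_inverse_le:
  fixes \<rho> \<rho>' \<sigma> :: ereal
  assumes "0 \<le> \<rho>'" "0 \<le> \<sigma>"
    and "\<And>r1 r2. 0 < r1 \<Longrightarrow> 0 < r2 \<Longrightarrow> ereal r1 < \<rho> \<Longrightarrow> ereal r2 < \<rho>'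
      \<Longrightarrow> ereal (r1 * r2 / (r2 + 1)) \<le> \<sigma>"
  shows "\<rho> / (1 + inverse \<rho>') \<le> \<sigma>"
proof (rule dense_le)
  fix y assume y: "y < \<rho> / (1 + inverse \<rho>')"
  show "y \<le> \<sigma>"
  proof (cases "y \<le> 0")
    case True
    then show ?thesis
      using assms(2) by (rule order_trans)
  next
    case False
    with y obtain r where r: "y = ereal r" "0 < r"
      by (cases y) auto
    with y assms(1) obtain r1 r2 where "0 < r1" "0 < r2" "ereal r1 < \<rho>" "ereal r2 < \<rho>'"
      "r = r1 * r2 / (r2 + 1)"
      by (auto elim: ereal_less_divide_one_plus_inverseE)
    then show ?thesis
      using assms(3) r by simp
  qed
qed

theorem lemma1:
  fixes C :: "nat \<Rightarrow> (nat \<Rightarrow> 'a::{field,finite}) set"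
    and C1' :: "(nat \<Rightarrow> 'a) set"
    and n D :: nat
  assumes "CHAR('a) = 2"
    and "D \<ge> 2"
    and "\<And>i. i < D \<Longrightarrow> is_code n (C i)"
    and "is_code n C1'"
    and "C1' \<subseteq> C 0"
  shows "rho n D (C(0 := C1')) \<ge>
           rho n D C / (1 + inverse (rho n (D - 1) (\<lambda>i. C (Suc i))))"
proof -
  obtain E where D: "D = Suc E"
    using assms(2) by (cases D) auto
  have "rho n (Suc E) C / (1 + inverse (rho n E (\<lambda>i. C (Suc i)))) \<le> rho n (Suc E) (C(0 := C1'))"
  proof (rule ereal_divide_one_plus_inverse_le[OF rho_nonneg rho_nonneg])
    fix r1 r2 :: real
    assume r: "0 < r1" "0 < r2" "ereal r1 < rho n (Suc E) C" "ereal r2 < rho n E (\<lambda>i. C (Suc i))"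
    have "product_expanding n (Suc E) (C(0 := C1')) (r1 * r2 / (r2 + 1))"
      by (rule product_expanding_subcode) (use assms(3-5) D r product_expanding_less_rho in auto)
    then show "ereal (r1 * r2 / (r2 + 1)) \<le> rho n (Suc E) (C(0 := C1'))"
      by (rule rho_ge)
  qed
  then show ?thesis
    using D by simp
qed

end
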